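(* Let $d\ge2$ be an integer, let $C>1$, let $K$ be a compact subset of $\mathbb{C}^*$ and let $L$ be a compact subset of the set of monic polynomials of degree $d$. There exists a constant $A>0$ such that, if $b\in\mathbb{C}$ satisfies $|b|>A$, then for every $N\ge1$ and all $\alpha_1,\ldots,\alpha_N\in K$ and $P_1,\ldots,P_N\in L$, the map $f:=f_N\circ\cdots\circ f_1$, where $f_i(z):=P_i(z)-b\alpha_i$, is hyperbolic with an expanding constant larger than $C$.
   Context: The set of monic degree $d$ polynomials is identified with $\mathbb{C}^d$ via coefficients. A polynomial $f$ is hyperbolic with expanding constant larger than $C$ if it is uniformly expanding on its Julia set with expansion factor larger than $C$ (i.e. $|f'|>C$ on the Julia set of $f$). *)

theory Defs
  imports "HOL-Analysis.Analysis" "HOL-Computational_Algebra.Polynomial"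
begin

definition filled_julia :: "(complex \<Rightarrow> complex) \<Rightarrow> complex set" where
  "filled_julia f = {z. bounded (range (\<lambda>n. (f ^^ n) z))}"

definition julia_set :: "(complex \<Rightarrow> complex) \<Rightarrow> complex set" where
  "julia_set f = frontier (filled_julia f)"

definition hyperbolic_expanding :: "(complex \<Rightarrow> complex) \<Rightarrow> real \<Rightarrow> bool" where
  "hyperbolic_expanding f C \<longleftrightarrow> (\<forall>z\<in>julia_set f. C < norm (deriv f z))"

text \<open>Coefficient vector of a polynomial (product topology on nat => complex; for monic
  degree d polynomials this is homeomorphic to the usual identification with C^d).\<close>
definition poly_coeffs :: "complex poly \<Rightarrow> (nat \<Rightarrow> complex)" where
  "poly_coeffs p = (\<lambda>i. coeff p i)"

primrec comp_seq :: "(nat \<Rightarrow> 'a \<Rightarrow> 'a) \<Rightarrow> nat \<Rightarrow> 'a \<Rightarrow> 'a" where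
  "comp_seq f 0 = id"
| "comp_seq f (Suc n) = f (Suc n) \<circ> comp_seq f n"

end

theory Submission
  imports Defs
begin

text \<open>Let \<open>r \<le> |\<alpha>| \<le> \<rho>\<close> on \<open>K\<close>, let \<open>B\<close> bound the coefficients of the polynomials in \<open>L\<close>,
  and put \<open>R = r|b|/4\<close>. For \<open>|w| \<ge> R\<close> the term \<open>|P\<^sub>i(w)| \<ge> |w|\<^sup>2/2\<close> dominates
  \<open>|b\<alpha>\<^sub>i| \<le> (4\<rho>/r)|w|\<close>, so every \<open>f\<^sub>i\<close> at least doubles the modulus there. Hence a point of
  the filled Julia set of \<open>f\<close> never leaves the disc of radius \<open>R\<close> along the partial
  compositions, and neither does a point of the Julia set, since this condition is closed.
  At such a point every intermediate value \<open>w\<close> satisfies \<open>|f\<^sub>k(w)| \<le> R\<close>, so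
  \<open>|P\<^sub>k(w)| \<ge> |b||\<alpha>\<^sub>k| - R \<ge> 3R\<close> is huge. This forces \<open>|w|\<close> to be large, hence
  \<open>|P\<^sub>k'(w)| \<ge> dC\<close>, and by the chain rule \<open>|f'| \<ge> (dC)\<^sup>N > C\<close>.\<close>

lemma norm_sum_powers_le:
  fixes a :: "nat \<Rightarrow> 'a::real_normed_field" and B :: real
  assumes "\<And>i. i < m \<Longrightarrow> norm (a i) \<le> B"
  shows "norm (\<Sum>i<m. a i * w ^ i) \<le> m * B * max 1 (norm w) ^ (m - 1)"
proof -
  have "norm (a i * w ^ i) \<le> B * max 1 (norm w) ^ (m - 1)" if "i < m" for i
  proof -
    have "norm (w ^ i) \<le> max 1 (norm w) ^ i"
      by (simp add: norm_power power_mono)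
    also have "\<dots> \<le> max 1 (norm w) ^ (m - 1)"
      using that by (intro power_increasing) auto
    finally show ?thesis
      unfolding norm_mult using assms[OF that] order_trans[OF norm_ge_zero assms[OF that]]
      by (intro mult_mono) auto
  qed
  then have "norm (\<Sum>i<m. a i * w ^ i) \<le> (\<Sum>i<m. B * max 1 (norm w) ^ (m - 1))"
    by (intro sum_norm_le) simp
  then show ?thesis
    by simp
qed

lemma norm_poly_le:
  fixes p :: "'a::real_normed_field poly" and B :: real
  assumes "\<And>j. norm (coeff p j) \<le> B"
  shows "norm (poly p w) \<le> real (degree p + 1) * B * max 1 (norm w) ^ degree p"
proof -
  have "norm (\<Sum>i<degree p + 1. coeff p i * w ^ i)
      \<le> real (degree p + 1) * B * max 1 (norm w) ^ (degree p + 1 - 1)"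
    using assms by (rule norm_sum_powers_le)
  then show ?thesis
    by (simp add: poly_altdef lessThan_Suc_atMost)
qed

lemma norm_poly_ge:
  fixes p :: "'a::real_normed_field poly" and B :: real
  assumes "0 < degree p" "\<And>j. j < degree p \<Longrightarrow> norm (coeff p j) \<le> B" "1 \<le> norm w"
  shows "norm w ^ (degree p - 1) * (norm (lead_coeff p) * norm w - degree p * B)
           \<le> norm (poly p w)"
proof -
  let ?n = "degree p"
  have "poly p w = lead_coeff p * w ^ ?n + (\<Sum>i<?n. coeff p i * w ^ i)"
    by (simp add: poly_altdef lessThan_Suc_atMost[symmetric])
  then have "norm (lead_coeff p * w ^ ?n) \<le> norm (poly p w) + norm (\<Sum>i<?n. coeff p i * w ^ i)"
    by (metis add_diff_cancel_right' norm_triangle_ineq4)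
  moreover have "norm (\<Sum>i<?n. coeff p i * w ^ i) \<le> ?n * B * norm w ^ (?n - 1)"
    using norm_sum_powers_le[of ?n "coeff p" B w] assms(2,3) by simp
  moreover have "norm w ^ ?n = norm w ^ (?n - 1) * norm w"
    using assms(1) by (metis Suc_diff_1 power_Suc2)
  ultimately show ?thesis
    by (simp add: norm_mult norm_power algebra_simps)
qed

lemma monic_poly_escape:
  fixes P :: "complex poly" and B E :: real
  assumes "lead_coeff P = 1" "degree P = d" "2 \<le> d" "\<And>j. norm (coeff P j) \<le> B"
    and "2 * real d * B \<le> norm w" "4 + 2 * E \<le> norm w" "norm c \<le> E * norm w"
  shows "2 * norm w \<le> norm (poly P w - c)"
proof -
  define x where "x = norm w"
  have "1 \<le> B"
    using assms(1,2) assms(4)[of d] by simp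
  then have "2 * 2 * 1 \<le> 2 * real d * B"
    using assms(3) by (intro mult_mono) auto
  then have "4 \<le> x"
    using assms(5) x_def by linarith
  have "x ^ (d - 1) * (x - d * B) \<le> norm (poly P w)"
    using norm_poly_ge[of P B w] assms(1-4) \<open>4 \<le> x\<close> x_def by simp
  moreover have "x * (x / 2) \<le> x ^ (d - 1) * (x - d * B)"
  proof (rule mult_mono)
    show "x \<le> x ^ (d - 1)"
      using \<open>4 \<le> x\<close> assms(3) by (intro self_le_power) auto
  qed (use assms(5) \<open>4 \<le> x\<close> x_def in auto)
  moreover have "norm (poly P w) \<le> norm (poly P w - c) + norm c"
    by (metis diff_add_cancel norm_triangle_ineq)
  moreover have "x * 2 \<le> x * (x / 2 - E)"
    using assms(6) \<open>4 \<le> x\<close> x_def by (intro mult_left_mono) auto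
  ultimately show ?thesis
    using assms(7) x_def by (simp add: algebra_simps)
qed

lemma norm_pderiv_monic_ge:
  fixes P :: "complex poly" and B M :: real
  assumes "lead_coeff P = 1" "degree P = d" "2 \<le> d" "\<And>j. norm (coeff P j) \<le> B"
    and "0 \<le> M" "d * B + M \<le> norm w"
  shows "d * M \<le> norm (poly (pderiv P) w)"
proof -
  have "1 \<le> B"
    using assms(1,2) assms(4)[of d] by simp
  then have "2 * 1 \<le> d * B"
    using assms(3) by (intro mult_mono) auto
  then have "1 \<le> norm w"
    using assms(5,6) by linarith
  have deg: "degree (pderiv P) = d - 1" and lead: "coeff (pderiv P) (d - 1) = of_nat d"
    using assms(1,2,3) by (simp_all add: degree_pderiv coeff_pderiv)
  have "norm (coeff (pderiv P) j) \<le> d * B" if "j < degree (pderiv P)" for j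
    unfolding coeff_pderiv norm_mult norm_of_nat
    using that deg assms(4)[of "Suc j"] \<open>1 \<le> B\<close> by (intro mult_mono) auto
  then have "norm w ^ (degree (pderiv P) - 1)
      * (norm (lead_coeff (pderiv P)) * norm w - degree (pderiv P) * (d * B))
      \<le> norm (poly (pderiv P) w)"
    using norm_poly_ge[of "pderiv P" "d * B" w] deg assms(3) \<open>1 \<le> norm w\<close> by simp
  then have "norm w ^ (d - 2) * (d * norm w - (d - 1) * (d * B))
      \<le> norm (poly (pderiv P) w)"
    unfolding deg lead norm_of_nat diff_diff_left by (simp add: numeral_2_eq_2)
  moreover have "d * M \<le> d * norm w - (d - 1) * (d * B)"
  proof -
    have "d * M \<le> d * (norm w - d * B)"
      using assms(6) by (intro mult_left_mono) auto
    moreover have "real (d - 1) * (d * B) \<le> d * (d * B)"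
      using \<open>1 \<le> B\<close> by (intro mult_right_mono) auto
    ultimately show ?thesis
      by (simp add: algebra_simps)
  qed
  then have "norm w ^ (d - 2) * (d * M) \<le> norm w ^ (d - 2) * (d * norm w - (d - 1) * (d * B))"
    by (intro mult_left_mono) auto
  moreover have "1 * (d * M) \<le> norm w ^ (d - 2) * (d * M)"
    using \<open>1 \<le> norm w\<close> assms(5) by (intro mult_right_mono one_le_power) auto
  ultimately show ?thesis
    by linarith
qed

lemma norm_pderiv_monic_ge_if_norm_poly_gt:
  fixes P :: "complex poly" and B M :: real
  assumes "lead_coeff P = 1" "degree P = d" "2 \<le> d" "\<And>j. norm (coeff P j) \<le> B"
    and "0 \<le> M" "real (d + 1) * B * (d * B + M) ^ d < norm (poly P w)"
  shows "d * M \<le> norm (poly (pderiv P) w)"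
proof (rule norm_pderiv_monic_ge[OF assms(1-5)])
  have "1 \<le> B"
    using assms(1,2) assms(4)[of d] by simp
  have "real (d + 1) * B * (d * B + M) ^ d < real (d + 1) * B * max 1 (norm w) ^ d"
    using assms(6) norm_poly_le[of P B w, OF assms(4)] unfolding assms(2) by linarith
  then have "(d * B + M) ^ d < max 1 (norm w) ^ d"
    using \<open>1 \<le> B\<close> by (simp add: mult_less_cancel_left_pos)
  then have "d * B + M < max 1 (norm w)"
    by (rule power_less_imp_less_base) simp
  moreover have "2 * 1 \<le> d * B"
    using assms(3) \<open>1 \<le> B\<close> by (intro mult_mono) auto
  ultimately show "d * B + M \<le> norm w"
    using assms(5) by linarith
qed

lemma comp_seq_has_field_derivative:
  fixes f f' :: "nat \<Rightarrow> 'a::real_normed_field \<Rightarrow> 'a"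
  assumes "\<And>i z. (f i has_field_derivative f' i z) (at z)"
  shows "(comp_seq f n has_field_derivative (\<Prod>k=1..n. f' k (comp_seq f (k - 1) z))) (at z)"
proof (induction n)
  case 0
  then show ?case
    by simp
next
  case (Suc n)
  have "(f (Suc n) \<circ> comp_seq f n has_field_derivative
      f' (Suc n) (comp_seq f n z) * (\<Prod>k=1..n. f' k (comp_seq f (k - 1) z))) (at z)"
    by (rule DERIV_chain[OF assms Suc.IH])
  then show ?case
    by (simp add: prod.nat_ivl_Suc' mult.commute o_def)
qed

lemma comp_seq_escape:
  fixes F :: "nat \<Rightarrow> 'a::real_normed_vector \<Rightarrow> 'a"
  assumes escape: "\<And>i w. i \<in> {1..N} \<Longrightarrow> R \<le> norm w \<Longrightarrow> 2 * norm w \<le> norm (F i w)"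
    and "R \<le> norm (comp_seq F k z)" "k \<le> j" "j \<le> N"
  shows "2 ^ (j - k) * norm (comp_seq F k z) \<le> norm (comp_seq F j z)"
  using \<open>k \<le> j\<close>
proof (induction j rule: dec_induct)
  case base
  then show ?case
    by simp
next
  case (step n)
  have "1 * norm (comp_seq F k z) \<le> 2 ^ (n - k) * norm (comp_seq F k z)"
    by (intro mult_right_mono one_le_power) auto
  then have "2 * norm (comp_seq F n z) \<le> norm (comp_seq F (Suc n) z)"
    using escape[of "Suc n" "comp_seq F n z"] assms(2) step.hyps step.IH \<open>j \<le> N\<close> by simp
  moreover have "Suc n - k = Suc (n - k)"
    using step.hyps by simp
  ultimately show ?case
    using step.IH by simp
qed

lemma filled_julia_subset_ball:
  fixes f :: "complex \<Rightarrow> complex"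
  assumes "0 < R" "\<And>u. R \<le> norm u \<Longrightarrow> 2 * norm u \<le> norm (f u)"
  shows "filled_julia f \<subseteq> ball 0 R"
proof
  fix z
  assume z: "z \<in> filled_julia f"
  show "z \<in> ball 0 R"
  proof (rule ccontr)
    assume "z \<notin> ball 0 R"
    then have "R \<le> norm z"
      by simp
    have orbit: "2 ^ n * norm z \<le> norm ((f ^^ n) z)" for n
    proof (induction n)
      case 0
      then show ?case
        by simp
    next
      case (Suc n)
      have "1 * norm z \<le> 2 ^ n * norm z"
        by (intro mult_right_mono one_le_power) auto
      then have "R \<le> norm ((f ^^ n) z)"
        using Suc.IH \<open>R \<le> norm z\<close> by linarith
      then show ?case
        using assms(2)[of "(f ^^ n) z"] Suc.IH by simp
    qed
    obtain M where M: "\<And>n. norm ((f ^^ n) z) \<le> M"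
      using z unfolding filled_julia_def bounded_iff by blast
    obtain n where "M / norm z < 2 ^ n"
      using real_arch_pow[of 2] by auto
    moreover have "0 < norm z"
      using \<open>0 < R\<close> \<open>R \<le> norm z\<close> by linarith
    ultimately have "M < 2 ^ n * norm z"
      by (simp add: pos_divide_less_eq)
    then show False
      using orbit[of n] M[of n] by linarith
  qed
qed

lemma filled_julia_image:
  assumes "z \<in> filled_julia f"
  shows "f z \<in> filled_julia f"
proof -
  have "(f ^^ n) (f z) \<in> range (\<lambda>n. (f ^^ n) z)" for n
    using rangeI[of "\<lambda>n. (f ^^ n) z" "Suc n"] by (simp only: funpow_Suc_right o_apply)
  then have "range (\<lambda>n. (f ^^ n) (f z)) \<subseteq> range (\<lambda>n. (f ^^ n) z)"
    by blast
  then show ?thesis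
    using assms bounded_subset unfolding filled_julia_def by blast
qed

lemma julia_set_subset_closed:
  assumes "filled_julia f \<subseteq> S" "closed S"
  shows "julia_set f \<subseteq> S"
  using closure_minimal[OF assms] unfolding julia_set_def frontier_def by blast

lemma continuous_on_comp_seq:
  assumes "\<And>i. continuous_on UNIV (f i)"
  shows "continuous_on UNIV (comp_seq f n)"
  by (induction n) (auto intro: continuous_on_compose2[OF assms])

lemma julia_set_comp_seq_subset:
  fixes F :: "nat \<Rightarrow> complex \<Rightarrow> complex"
  assumes "\<And>i. continuous_on UNIV (F i)" "1 \<le> N" "0 < R"
    and escape: "\<And>i w. i \<in> {1..N} \<Longrightarrow> R \<le> norm w \<Longrightarrow> 2 * norm w \<le> norm (F i w)"
  shows "julia_set (comp_seq F N) \<subseteq> (\<Inter>k\<in>{1..N}. {z. norm (comp_seq F k z) \<le> R})"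
proof (rule julia_set_subset_closed)
  let ?g = "comp_seq F"
  show "closed (\<Inter>k\<in>{1..N}. {z. norm (?g k z) \<le> R})"
    using continuous_on_comp_seq[OF assms(1)]
    by (intro closed_INT ballI closed_Collect_le continuous_on_norm continuous_on_const)
  show "filled_julia (?g N) \<subseteq> (\<Inter>k\<in>{1..N}. {z. norm (?g k z) \<le> R})"
  proof
    fix z
    assume z: "z \<in> filled_julia (?g N)"
    have "2 * norm u \<le> norm (?g N u)" if "R \<le> norm u" for u
    proof -
      have "2 * norm u \<le> 2 ^ N * norm u"
        using \<open>1 \<le> N\<close> by (intro mult_right_mono self_le_power) auto
      also have "\<dots> \<le> norm (?g N u)"
        using comp_seq_escape[of N R F 0 u N] escape that by simp
      finally show ?thesis .
    qed
    then have "norm (?g N z) < R"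
      using filled_julia_subset_ball[OF \<open>0 < R\<close>] filled_julia_image[OF z] by force
    have "norm (?g k z) \<le> R" if "k \<in> {1..N}" for k
    proof (rule ccontr)
      assume "\<not> norm (?g k z) \<le> R"
      then have "1 * norm (?g k z) \<le> 2 ^ (N - k) * norm (?g k z)"
        by (intro mult_right_mono one_le_power) auto
      also have "\<dots> \<le> norm (?g N z)"
        using comp_seq_escape[of N R F k z N] escape that \<open>\<not> norm (?g k z) \<le> R\<close> by simp
      finally show False
        using \<open>norm (?g N z) < R\<close> \<open>\<not> norm (?g k z) \<le> R\<close> by linarith
    qed
    then show "z \<in> (\<Inter>k\<in>{1..N}. {z. norm (?g k z) \<le> R})"
      by blast
  qed
qed

lemma comp_seq_hyperbolic_expanding:
  fixes F F' :: "nat \<Rightarrow> complex \<Rightarrow> complex" and R M C :: real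
  assumes deriv: "\<And>i z. (F i has_field_derivative F' i z) (at z)"
    and "1 \<le> N" "0 < R" "1 \<le> M" "C < M"
    and escape: "\<And>i w. i \<in> {1..N} \<Longrightarrow> R \<le> norm w \<Longrightarrow> 2 * norm w \<le> norm (F i w)"
    and expand: "\<And>i w. i \<in> {1..N} \<Longrightarrow> norm (F i w) \<le> R \<Longrightarrow> M \<le> norm (F' i w)"
  shows "hyperbolic_expanding (comp_seq F N) C"
  unfolding hyperbolic_expanding_def
proof
  let ?g = "comp_seq F"
  fix z
  assume "z \<in> julia_set (?g N)"
  moreover have "continuous_on UNIV (F i)" for i
    using deriv by (meson DERIV_isCont continuous_at_imp_continuous_on)
  ultimately have bounded: "norm (?g k z) \<le> R" if "k \<in> {1..N}" for k
    using julia_set_comp_seq_subset[of F N R] \<open>1 \<le> N\<close> \<open>0 < R\<close> escape that by blast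
  have "M \<le> norm (F' k (?g (k - 1) z))" if "k \<in> {1..N}" for k
  proof (rule expand[OF that])
    have "?g k z = F k (?g (k - 1) z)"
      using that by (cases k) auto
    then show "norm (F k (?g (k - 1) z)) \<le> R"
      using bounded[OF that] by simp
  qed
  then have "(\<Prod>k=1..N. M) \<le> (\<Prod>k=1..N. norm (F' k (?g (k - 1) z)))"
    using \<open>1 \<le> M\<close> by (intro prod_mono) auto
  moreover have "M \<le> M ^ N"
    using \<open>1 \<le> M\<close> \<open>1 \<le> N\<close> by (intro self_le_power) auto
  moreover have "deriv (?g N) z = (\<Prod>k=1..N. F' k (?g (k - 1) z))"
    using comp_seq_has_field_derivative[OF deriv] by (rule DERIV_imp_deriv)
  ultimately show "C < norm (deriv (?g N) z)"
    using \<open>C < M\<close> by (simp add: prod_norm)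
qed

lemma coeffs_bounded_if_compact:
  assumes "compact (poly_coeffs ` L)" "\<And>P. P \<in> L \<Longrightarrow> degree P \<le> d"
  obtains B where "0 < B" "\<And>P j. P \<in> L \<Longrightarrow> norm (coeff P j) \<le> B"
proof -
  have "compact (\<Union>j\<le>d. (\<lambda>c. c j) ` poly_coeffs ` L)"
    using assms(1) by (intro compact_UN finite_atMost compact_continuous_image
      continuous_on_subset[OF continuous_on_product_coordinates]) auto
  then obtain B where "0 < B" and B: "\<forall>x\<in>(\<Union>j\<le>d. (\<lambda>c. c j) ` poly_coeffs ` L). norm x \<le> B"
    using compact_imp_bounded bounded_pos by metis
  have "norm (coeff P j) \<le> B" if "P \<in> L" for P j
  proof (cases "j \<le> d")
    case True
    then show ?thesis
      using B that unfolding poly_coeffs_def by blast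
  next
    case False
    then have "coeff P j = 0"
      using assms(2)[OF that] by (intro coeff_eq_0) simp
    then show ?thesis
      using \<open>0 < B\<close> by simp
  qed
  then show thesis
    using that \<open>0 < B\<close> by blast
qed

lemma perturbed_monic_comp_hyperbolic_expanding:
  fixes b :: complex and \<alpha> :: "nat \<Rightarrow> complex" and P :: "nat \<Rightarrow> complex poly"
    and B C r \<rho> :: real
  assumes "2 \<le> d" "1 \<le> C" "0 < r" "1 \<le> N"
    and P: "\<And>i. i \<in> {1..N} \<Longrightarrow>
      lead_coeff (P i) = 1 \<and> degree (P i) = d \<and> (\<forall>j. norm (coeff (P i) j) \<le> B)"
    and \<alpha>: "\<And>i. i \<in> {1..N} \<Longrightarrow> r \<le> norm (\<alpha> i) \<and> norm (\<alpha> i) \<le> \<rho>"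
    and b: "4 * (2 * real d * B + 4 + 8 * \<rho> / r + real (d + 1) * B * (d * B + C) ^ d) / r < norm b"
  shows "hyperbolic_expanding (comp_seq (\<lambda>i z. poly (P i) z - b * \<alpha> i) N) C"
proof -
  define R where "R = r * norm b / 4"
  have "1 \<in> {1..N}"
    using \<open>1 \<le> N\<close> by simp
  then have "1 \<le> B" "r \<le> \<rho>"
    using P[of 1] \<alpha>[of 1] by (auto dest: spec[of _ d])
  then have "0 \<le> 2 * real d * B" "0 \<le> 8 * \<rho> / r" "0 \<le> real (d + 1) * B * (d * B + C) ^ d"
    using \<open>0 < r\<close> \<open>1 \<le> C\<close> by auto
  moreover have
    "4 * (2 * real d * B + 4 + 8 * \<rho> / r + real (d + 1) * B * (d * B + C) ^ d) < r * norm b"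
    using b \<open>0 < r\<close> by (simp add: pos_divide_less_eq mult.commute)
  ultimately have R: "2 * real d * B \<le> R" "4 + 8 * \<rho> / r \<le> R"
      "real (d + 1) * B * (d * B + C) ^ d < R" "0 < R"
    using R_def by argo+
  show ?thesis
  proof (rule comp_seq_hyperbolic_expanding[where F' = "\<lambda>i z. poly (pderiv (P i)) z"])
    show "((\<lambda>z. poly (P i) z - b * \<alpha> i) has_field_derivative poly (pderiv (P i)) z) (at z)"
      for i z
      by (auto intro!: derivative_eq_intros)
    have "2 * C \<le> real d * C"
      using \<open>2 \<le> d\<close> \<open>1 \<le> C\<close> by (intro mult_right_mono) auto
    then show "1 \<le> real d * C" "C < real d * C"
      using \<open>1 \<le> C\<close> by linarith+
  next
    fix i and w :: complex
    assume i: "i \<in> {1..N}" and w: "R \<le> norm w"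
    have "norm (b * \<alpha> i) \<le> norm b * \<rho>"
      using \<alpha>[OF i] by (simp add: norm_mult mult_left_mono)
    also have "\<dots> = 4 * \<rho> / r * R"
      using \<open>0 < r\<close> unfolding R_def by simp
    also have "\<dots> \<le> 4 * \<rho> / r * norm w"
      using w \<open>r \<le> \<rho>\<close> \<open>0 < r\<close> by (intro mult_left_mono) auto
    finally show "2 * norm w \<le> norm (poly (P i) w - b * \<alpha> i)"
      using monic_poly_escape[of "P i" d B w "4 * \<rho> / r"] P[OF i] \<open>2 \<le> d\<close> R(1,2) w by auto
  next
    fix i and w :: complex
    assume i: "i \<in> {1..N}" and "norm (poly (P i) w - b * \<alpha> i) \<le> R"
    moreover have "r * norm b \<le> norm (\<alpha> i) * norm b"
      using \<alpha>[OF i] by (intro mult_right_mono) auto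
    moreover have "norm (\<alpha> i) * norm b = norm (b * \<alpha> i)"
      by (simp add: norm_mult)
    moreover have "norm (b * \<alpha> i) \<le> norm (poly (P i) w) + norm (poly (P i) w - b * \<alpha> i)"
      using norm_triangle_sub[of "b * \<alpha> i" "poly (P i) w"] by (simp add: norm_minus_commute)
    ultimately have "real (d + 1) * B * (d * B + C) ^ d < norm (poly (P i) w)"
      using R unfolding R_def by linarith
    then show "real d * C \<le> norm (poly (pderiv (P i)) w)"
      using norm_pderiv_monic_ge_if_norm_poly_gt[of "P i" d B C w] P[OF i] \<open>2 \<le> d\<close> \<open>1 \<le> C\<close>
      by auto
  qed (use \<open>1 \<le> N\<close> R(4) in auto)
qed

theorem lemma2p2:
  fixes d :: nat and C :: real and K :: "complex set" and L :: "complex poly set"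
  assumes "d \<ge> 2" and "C > 1"
    and "compact K" and "K \<subseteq> - {0}"
    and "\<forall>P\<in>L. lead_coeff P = 1 \<and> degree P = d"
    and "compact (poly_coeffs ` L)"
  shows "\<exists>A>0. \<forall>b::complex. norm b > A \<longrightarrow>
           (\<forall>N\<ge>1. \<forall>(\<alpha>::nat \<Rightarrow> complex) (P::nat \<Rightarrow> complex poly).
              (\<forall>i\<in>{1..N}. \<alpha> i \<in> K \<and> P i \<in> L) \<longrightarrow>
              hyperbolic_expanding (comp_seq (\<lambda>i z. poly (P i) z - b * \<alpha> i) N) C)"
proof -
  obtain r where "0 < r" and r: "\<forall>a\<in>K. r \<le> norm a"
    using separate_point_closed[OF compact_imp_closed[OF assms(3)], of 0] assms(4) by auto
  obtain \<rho> where "0 < \<rho>" and \<rho>: "\<forall>a\<in>K. norm a \<le> \<rho>"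
    using compact_imp_bounded[OF assms(3)] bounded_pos by auto
  obtain B where "0 < B" and B: "\<And>P j. P \<in> L \<Longrightarrow> norm (coeff P j) \<le> B"
    using coeffs_bounded_if_compact[OF assms(6), of d] assms(5) by auto
  define A where
    "A = 4 * (2 * real d * B + 4 + 8 * \<rho> / r + real (d + 1) * B * (d * B + C) ^ d) / r"
  have "0 < A"
    unfolding A_def using \<open>0 < r\<close> \<open>0 < \<rho>\<close> \<open>0 < B\<close> assms(2)
    by (intro divide_pos_pos mult_pos_pos add_nonneg_pos add_pos_nonneg) auto
  show ?thesis
  proof (intro exI[of _ A] conjI allI impI \<open>0 < A\<close>)
    fix b :: complex and N \<alpha> and P :: "nat \<Rightarrow> complex poly"
    assume "A < norm b" "1 \<le> N" and hyp: "\<forall>i\<in>{1..N}. \<alpha> i \<in> K \<and> P i \<in> L"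
    have P: "lead_coeff (P i) = 1 \<and> degree (P i) = d \<and> (\<forall>j. norm (coeff (P i) j) \<le> B)"
      if "i \<in> {1..N}" for i
      using hyp that assms(5) B by blast
    have \<alpha>: "r \<le> norm (\<alpha> i) \<and> norm (\<alpha> i) \<le> \<rho>" if "i \<in> {1..N}" for i
      using hyp that r \<rho> by blast
    show "hyperbolic_expanding (comp_seq (\<lambda>i z. poly (P i) z - b * \<alpha> i) N) C"
      using perturbed_monic_comp_hyperbolic_expanding[OF assms(1) _ \<open>0 < r\<close> \<open>1 \<le> N\<close> P \<alpha>]
        assms(2) \<open>A < norm b\<close> unfolding A_def by simp
  qed
qed

end
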